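(* For each $N\in\mathbb{N}^*$ there exists a constant $K_N$ such that for all $(i_1,\dots,i_N)\in\{1,\dots,6\}^N$ and all $(x,y)\in\mathcal{D}$, $$|x_{i_1,\dots,i_N}(x,y)-z_{i_1,\dots,i_N}(x)|\leq K_N y\quad\text{and}\quad |y_{i_1,\dots,i_N}(x,y)|\leq K_N y.$$
   Context: Every non-degenerate triangle is mapped by a similitude to a triangle with vertices $(0,0)$, $(1,0)$, $(x,y)$, with the longest edge sent to $[(0,0),(1,0)]$ and the shortest edge to $[(0,0),(x,y)]$; $(x,y)$ is its characterizing point and $\mathcal{D}\subset[0,1/2]\times[0,\sqrt3/2]$ is the set of characterizing points (flat triangles have $y=0$). For the triangle with vertices $A=(0,0)$, $B=(x,y)$, $C=(1,0)$, let $D,E,F$ be the midpoints of $[A,B],[B,C],[A,C]$ and $G$ the barycenter; the barycentric subdivision gives $T_1=\{A,D,G\}$, $T_2=\{D,B,G\}$, $T_3=\{B,E,G\}$, $T_4=\{E,C,G\}$, $T_5=\{C,F,G\}$, $T_6=\{F,A,G\}$, and $(x_i(x,y),y_i(x,y))$ denotes the characterizing point of $T_i$. Set $z_i(x)=x_i(x,0)$ for $x\in[0,1/2]$. Let $(\iota_n)_{n\ge1}$ be i.i.d. uniform on $\{1,\dots,6\}$ and define the coupled chains $(X_{n+1},Y_{n+1})=(x_{\iota_{n+1}}(X_n,Y_n),y_{\iota_{n+1}}(X_n,Y_n))$ and $Z_{n+1}=z_{\iota_{n+1}}(Z_n)$. For $(x,y)\in\mathcal{D}$ and $(i_1,\dots,i_N)\in\{1,\dots,6\}^N$,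 $x_{i_1,\dots,i_N}(x,y)$, $y_{i_1,\dots,i_N}(x,y)$ and $z_{i_1,\dots,i_N}(x)$ denote the values of $X_N$, $Y_N$ and $Z_N$ when $(X_0,Y_0)=(x,y)$, $Z_0=x$ and $(\iota_1,\dots,\iota_N)=(i_1,\dots,i_N)$. *)

theory Defs
  imports Complex_Main
begin

type_synonym pt = "real \<times> real"

definition seglen :: "pt \<Rightarrow> pt \<Rightarrow> real" where
  "seglen P Q = sqrt ((fst P - fst Q)^2 + (snd P - snd Q)^2)"

text \<open>Characterizing point of the triangle with vertices P, Q, R: with side lengths
  a (longest) \<ge> b (middle) \<ge> c (shortest), the similitude sending the longest edge to
  [(0,0),(1,0)] and the shortest edge to [(0,0),(x,y)] (y \<ge> 0) gives the point (x,y) with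
  |(x,y)| = c/a and |(x,y)-(1,0)| = b/a, i.e. the formulas below.\<close>
definition charpt :: "pt \<Rightarrow> pt \<Rightarrow> pt \<Rightarrow> pt" where
  "charpt P Q R =
     (let l1 = seglen P Q; l2 = seglen Q R; l3 = seglen R P;
          a = max l1 (max l2 l3); c = min l1 (min l2 l3); b = l1 + l2 + l3 - a - c;
          x = (a^2 + c^2 - b^2) / (2 * a^2)
      in (x, sqrt ((c / a)^2 - x^2)))"

definition charD :: "pt set" where
  "charD = {charpt P Q R | P Q R. \<not> (P = Q \<and> Q = R)}"

definition midpt :: "pt \<Rightarrow> pt \<Rightarrow> pt" where
  "midpt P Q = ((fst P + fst Q) / 2, (snd P + snd Q) / 2)"

definition subpt :: "nat \<Rightarrow> pt \<Rightarrow> pt" where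
  "subpt i p =
     (let A = (0,0); B = p; C = (1,0);
          D = midpt A B; E = midpt B C; F = midpt A C;
          G = ((fst A + fst B + fst C) / 3, (snd A + snd B + snd C) / 3)
      in if i = 1 then charpt A D G
         else if i = 2 then charpt D B G
         else if i = 3 then charpt B E G
         else if i = 4 then charpt E C G
         else if i = 5 then charpt C F G
         else charpt F A G)"

definition xi :: "nat \<Rightarrow> real \<Rightarrow> real \<Rightarrow> real" where
  "xi i x y = fst (subpt i (x, y))"

definition yi :: "nat \<Rightarrow> real \<Rightarrow> real \<Rightarrow> real" where
  "yi i x y = snd (subpt i (x, y))"

definition zi :: "nat \<Rightarrow> real \<Rightarrow> real" where
  "zi i x = xi i x 0"

text \<open>Iterates along a word (i_1,...,i_N): i_1 is applied first.\<close>
definition xy_iter :: "nat list \<Rightarrow> pt \<Rightarrow> pt" where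
  "xy_iter is p = foldl (\<lambda>q i. (xi i (fst q) (snd q), yi i (fst q) (snd q))) p is"

definition z_iter :: "nat list \<Rightarrow> real \<Rightarrow> real" where
  "z_iter is x = foldl (\<lambda>z i. zi i z) x is"

end

theory Submission
  imports Defs
begin

(* The map (x, y) \<mapsto> (x_i, y_i) is the characterizing point of a triangle whose vertices
  depend affinely on (x, y). In terms of the sorted squared side lengths A \<ge> B \<ge> C, that point
  is ((A + C - B) / (2A), 2 area / A). On [0,1/2] \<times> [0,1] every subtriangle T_i has A \<ge> 1/16,
  so x_i is Lipschitz there, while its area is y/12, so y_i \<le> 3y. Since z_i(x) = x_i(x, 0),
  each step multiplies both |X_n - Z_n| and Y_n by at most a constant factor. *)

definition max3 :: "real \<Rightarrow> real \<Rightarrow> real \<Rightarrow> real" where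
  "max3 a b c = max a (max b c)"

definition min3 :: "real \<Rightarrow> real \<Rightarrow> real \<Rightarrow> real" where
  "min3 a b c = min a (min b c)"

definition mid3 :: "real \<Rightarrow> real \<Rightarrow> real \<Rightarrow> real" where
  "mid3 a b c = a + b + c - max3 a b c - min3 a b c"

lemma min3_le_mid3: "min3 a b c \<le> mid3 a b c"
  and mid3_le_max3: "mid3 a b c \<le> max3 a b c"
  and le_max3: "a \<le> max3 a b c" "b \<le> max3 a b c" "c \<le> max3 a b c"
  by (auto simp: mid3_def max3_def min3_def)

lemma min3_nonneg: "0 \<le> a \<Longrightarrow> 0 \<le> b \<Longrightarrow> 0 \<le> c \<Longrightarrow> 0 \<le> min3 a b c"
  by (simp add: min3_def)

lemma power2_max3_min3_mid3:
  fixes a b c :: real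
  assumes "0 \<le> a" "0 \<le> b" "0 \<le> c"
  shows "(max3 a b c)^2 = max3 (a^2) (b^2) (c^2)"
    and "(min3 a b c)^2 = min3 (a^2) (b^2) (c^2)"
    and "(mid3 a b c)^2 = mid3 (a^2) (b^2) (c^2)"
  using assms power_mono_iff[of _ _ 2]
  by (auto simp: max3_def min3_def mid3_def max_def min_def)

lemma max3_min3_mid3_sym2:
  "max3 a b c * min3 a b c + (max3 a b c + min3 a b c) * mid3 a b c = a * b + b * c + c * a"
  by (auto simp: max3_def min3_def mid3_def max_def min_def algebra_simps)

lemma max3_lipschitz:
  "\<bar>max3 a b c - max3 a' b' c'\<bar> \<le> \<bar>a - a'\<bar> + \<bar>b - b'\<bar> + \<bar>c - c'\<bar>"
  by (simp add: max3_def max_def abs_if split: if_splits)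

lemma min3_lipschitz:
  "\<bar>min3 a b c - min3 a' b' c'\<bar> \<le> \<bar>a - a'\<bar> + \<bar>b - b'\<bar> + \<bar>c - c'\<bar>"
  by (simp add: min3_def min_def abs_if split: if_splits)

definition sqdist :: "pt \<Rightarrow> pt \<Rightarrow> real" where
  "sqdist P Q = (fst P - fst Q)^2 + (snd P - snd Q)^2"

definition cross :: "pt \<Rightarrow> pt \<Rightarrow> pt \<Rightarrow> real" where
  "cross P Q R = (fst Q - fst P) * (snd R - snd P) - (snd Q - snd P) * (fst R - fst P)"

definition dist1 :: "pt \<Rightarrow> pt \<Rightarrow> real" where
  "dist1 P Q = \<bar>fst P - fst Q\<bar> + \<bar>snd P - snd Q\<bar>"

lemma sqdist_nonneg: "0 \<le> sqdist P Q"
  by (simp add: sqdist_def)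

lemma heron_sqdist:
  "4 * (sqdist P Q * sqdist Q R + sqdist Q R * sqdist R P + sqdist R P * sqdist P Q)
     - (sqdist P Q + sqdist Q R + sqdist R P)^2 = 4 * (cross P Q R)^2"
  unfolding sqdist_def cross_def by (simp add: algebra_simps power2_eq_square)

lemma cross_sq_le_sqdist: "(cross P Q R)^2 \<le> sqdist P Q * sqdist R P"
proof -
  have "sqdist P Q * sqdist R P = (cross P Q R)^2
      + ((fst Q - fst P) * (fst R - fst P) + (snd Q - snd P) * (snd R - snd P))^2"
    unfolding sqdist_def cross_def by (simp add: algebra_simps power2_eq_square)
  then show ?thesis by simp
qed

lemma sqdist_ge_sixteenth: "1/4 \<le> \<bar>fst P - fst Q\<bar> \<Longrightarrow> 1/16 \<le> sqdist P Q"
proof -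
  assume "1/4 \<le> \<bar>fst P - fst Q\<bar>"
  then have "(1/4)^2 \<le> \<bar>fst P - fst Q\<bar>^2"
    by (rule power_mono) simp
  then have "1/16 \<le> (fst P - fst Q)^2"
    by (simp add: power2_abs power_divide)
  then show ?thesis
    unfolding sqdist_def using zero_le_power2[of "snd P - snd Q"] by linarith
qed

lemma abs_power2_diff_le:
  fixes u v :: real
  assumes "\<bar>u\<bar> \<le> 1" "\<bar>v\<bar> \<le> 1"
  shows "\<bar>u^2 - v^2\<bar> \<le> 2 * \<bar>u - v\<bar>"
proof -
  have "\<bar>u^2 - v^2\<bar> = \<bar>u + v\<bar> * \<bar>u - v\<bar>"
    by (simp add: power2_eq_square abs_mult[symmetric] algebra_simps)
  also have "\<dots> \<le> 2 * \<bar>u - v\<bar>"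
    using assms by (intro mult_right_mono) auto
  finally show ?thesis .
qed

lemma sqdist_lipschitz:
  assumes "P \<in> {0..1} \<times> {0..1}" "Q \<in> {0..1} \<times> {0..1}"
    and "P' \<in> {0..1} \<times> {0..1}" "Q' \<in> {0..1} \<times> {0..1}"
  shows "\<bar>sqdist P Q - sqdist P' Q'\<bar> \<le> 2 * (dist1 P P' + dist1 Q Q')"
proof -
  have x: "\<bar>(fst P - fst Q)^2 - (fst P' - fst Q')^2\<bar> \<le> 2 * \<bar>(fst P - fst Q) - (fst P' - fst Q')\<bar>"
    and y: "\<bar>(snd P - snd Q)^2 - (snd P' - snd Q')^2\<bar> \<le> 2 * \<bar>(snd P - snd Q) - (snd P' - snd Q')\<bar>"
    using assms by (intro abs_power2_diff_le; auto simp: abs_le_iff)+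
  have "\<bar>sqdist P Q - sqdist P' Q'\<bar>
      \<le> \<bar>(fst P - fst Q)^2 - (fst P' - fst Q')^2\<bar> + \<bar>(snd P - snd Q)^2 - (snd P' - snd Q')^2\<bar>"
    unfolding sqdist_def by linarith
  also have "\<dots> \<le> 2 * (dist1 P P' + dist1 Q Q')"
  proof -
    have "\<bar>(fst P - fst Q) - (fst P' - fst Q')\<bar> \<le> \<bar>fst P - fst P'\<bar> + \<bar>fst Q - fst Q'\<bar>"
      "\<bar>(snd P - snd Q) - (snd P' - snd Q')\<bar> \<le> \<bar>snd P - snd P'\<bar> + \<bar>snd Q - snd Q'\<bar>"
      by arith+
    with x y show ?thesis unfolding dist1_def distrib_left by linarith
  qed
  finally show ?thesis .
qed

(* The abscissa of the characterizing point in terms of the squared side lengths; its ordinate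
  comes from Heron's formula 4AC - (A + C - B)^2 = (4 area)^2 for sorted A \<ge> B \<ge> C. *)
definition charx :: "real \<Rightarrow> real \<Rightarrow> real \<Rightarrow> real" where
  "charx a b c = (max3 a b c + min3 a b c - mid3 a b c) / (2 * max3 a b c)"

definition longest_sq :: "pt \<Rightarrow> pt \<Rightarrow> pt \<Rightarrow> real" where
  "longest_sq P Q R = max3 (sqdist P Q) (sqdist Q R) (sqdist R P)"

lemma charx_bounds:
  assumes "0 \<le> a" "0 \<le> b" "0 \<le> c"
  shows "0 \<le> charx a b c" "charx a b c \<le> 1/2"
  using min3_le_mid3[of a b c] mid3_le_max3[of a b c] min3_nonneg[OF assms]
  by (auto simp: charx_def divide_simps)

lemma sorted_heron_identity:
  "4 * max3 a b c * min3 a b c - (max3 a b c + min3 a b c - mid3 a b c)^2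
     = 4 * (a * b + b * c + c * a) - (a + b + c)^2"
proof -
  have "4 * max3 a b c * min3 a b c - (max3 a b c + min3 a b c - mid3 a b c)^2
      = 4 * (max3 a b c * min3 a b c + (max3 a b c + min3 a b c) * mid3 a b c) - (a + b + c)^2"
    by (simp add: mid3_def algebra_simps power2_eq_square)
  then show ?thesis by (simp only: max3_min3_mid3_sym2)
qed

lemma charpt_eq:
  "charpt P Q R = (charx (sqdist P Q) (sqdist Q R) (sqdist R P), \<bar>cross P Q R\<bar> / longest_sq P Q R)"
proof -
  define A where "A = longest_sq P Q R"
  define B where "B = mid3 (sqdist P Q) (sqdist Q R) (sqdist R P)"
  define C where "C = min3 (sqdist P Q) (sqdist Q R) (sqdist R P)"
  define x where "x = charx (sqdist P Q) (sqdist Q R) (sqdist R P)"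
  have seglen: "seglen U W = sqrt (sqdist U W)" for U W
    by (simp add: seglen_def sqdist_def)
  have charpt: "charpt P Q R = (x, sqrt (C / A - x^2))"
    unfolding charpt_def Let_def seglen
    using power2_max3_min3_mid3[of "sqrt (sqdist P Q)" "sqrt (sqdist Q R)" "sqrt (sqdist R P)"]
    by (simp add: sqdist_nonneg A_def C_def x_def charx_def longest_sq_def max3_def min3_def mid3_def
        power_divide)
  have heron: "4 * A * C - (A + C - B)^2 = 4 * (cross P Q R)^2"
    unfolding A_def B_def C_def longest_sq_def sorted_heron_identity heron_sqdist[symmetric]
    by (simp add: algebra_simps)
  have "0 \<le> C" "C \<le> A"
    unfolding A_def C_def longest_sq_def
    using min3_nonneg[OF sqdist_nonneg sqdist_nonneg sqdist_nonneg]
      min3_le_mid3 mid3_le_max3 by (blast intro: order_trans)+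
  show ?thesis
  proof (cases "A = 0")
    case True
    then have "x = 0"
      by (simp add: x_def A_def charx_def longest_sq_def)
    with True show ?thesis
      using charpt \<open>0 \<le> C\<close> \<open>C \<le> A\<close> unfolding x_def A_def by simp
  next
    case False
    have "C / A - x^2 = (4 * A * C - (A + C - B)^2) / (4 * A^2)"
      using False
    by (simp add: x_def A_def B_def C_def charx_def longest_sq_def field_simps power2_eq_square)
    also have "\<dots> = (cross P Q R / A)^2"
      using False by (simp only: heron) (simp add: power_divide)
    finally show ?thesis
      using charpt \<open>0 \<le> C\<close> \<open>C \<le> A\<close> unfolding x_def A_def by simp
  qed
qed

lemma charpt_in_region: "charpt P Q R \<in> {0..1/2} \<times> {0..1}"
proof -
  define A where "A = longest_sq P Q R"
  have "sqdist P Q \<le> A" "sqdist R P \<le> A"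
    unfolding A_def longest_sq_def by (rule le_max3)+
  moreover have "0 \<le> A"
    using \<open>sqdist P Q \<le> A\<close> sqdist_nonneg[of P Q] by linarith
  ultimately have "sqdist P Q * sqdist R P \<le> A * A"
    by (intro mult_mono) (auto simp: sqdist_nonneg)
  with cross_sq_le_sqdist[of P Q R] \<open>0 \<le> A\<close> have "\<bar>cross P Q R\<bar> \<le> A"
    using abs_le_square_iff[of _ A] by (simp add: power2_eq_square)
  then have "\<bar>cross P Q R\<bar> / A \<le> 1"
    by (cases "A = 0") auto
  then show ?thesis
    using charx_bounds[OF sqdist_nonneg sqdist_nonneg sqdist_nonneg] \<open>0 \<le> A\<close>
    by (simp add: charpt_eq A_def)
qed

lemma charx_lipschitz:
  assumes "0 \<le> a'" "0 \<le> b'" "0 \<le> c'"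
    and "0 < m" "m \<le> max3 a b c" "m \<le> max3 a' b' c'"
  shows "\<bar>charx a b c - charx a' b' c'\<bar> \<le> 3 / m * (\<bar>a - a'\<bar> + \<bar>b - b'\<bar> + \<bar>c - c'\<bar>)"
proof -
  define d where "d = \<bar>a - a'\<bar> + \<bar>b - b'\<bar> + \<bar>c - c'\<bar>"
  define A where "A = max3 a b c"
  define A' where "A' = max3 a' b' c'"
  define u where "u = max3 a b c + min3 a b c - mid3 a b c"
  define u' where "u' = max3 a' b' c' + min3 a' b' c' - mid3 a' b' c'"
  have dA: "\<bar>A - A'\<bar> \<le> d"
    unfolding A_def A'_def d_def by (rule max3_lipschitz)
  have dC: "\<bar>min3 a b c - min3 a' b' c'\<bar> \<le> d"
    unfolding d_def by (rule min3_lipschitz)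
  have du: "\<bar>u - u'\<bar> \<le> 5 * d"
    using d_def abs_le_D1[OF dA] abs_le_D2[OF dA] abs_le_D1[OF dC] abs_le_D2[OF dC]
      abs_ge_self[of "a - a'"] abs_ge_self[of "b - b'"] abs_ge_self[of "c - c'"]
      abs_ge_minus_self[of "a - a'"] abs_ge_minus_self[of "b - b'"] abs_ge_minus_self[of "c - c'"]
    unfolding u_def u'_def mid3_def A_def A'_def abs_le_iff
    by (intro conjI; linarith)
  have "0 < A" "0 < A'"
    using assms(4-6) by (simp_all add: A_def A'_def)
  have "0 \<le> u' / A'" "u' / A' \<le> 1"
    using min3_le_mid3[of a' b' c'] mid3_le_max3[of a' b' c'] min3_nonneg[OF assms(1-3)] \<open>0 < A'\<close>
    by (auto simp: u'_def A'_def)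
  \<comment> \<open>Since \<open>0 \<le> u' / A' \<le> 1\<close>, changing the denominator costs at most \<open>\<bar>A - A'\<bar>\<close>.\<close>
  have dq: "\<bar>u' / A' * (A' - A)\<bar> \<le> d"
  proof -
    have "\<bar>u' / A' * (A' - A)\<bar> = u' / A' * \<bar>A - A'\<bar>"
      using \<open>0 \<le> u' / A'\<close> by (simp only: abs_mult abs_of_nonneg abs_minus_commute)
    also have "\<dots> \<le> \<bar>A - A'\<bar>"
      using \<open>0 \<le> u' / A'\<close> \<open>u' / A' \<le> 1\<close> by (rule mult_left_le_one_le[OF abs_ge_zero])
    finally show ?thesis using dA by linarith
  qed
  have "charx a b c - charx a' b' c' = ((u - u') + u' / A' * (A' - A)) / (2 * A)"
    using \<open>0 < A\<close> \<open>0 < A'\<close> by (simp add: charx_def u_def u'_def A_def A'_def field_simps)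
  then have "\<bar>charx a b c - charx a' b' c'\<bar> = \<bar>(u - u') + u' / A' * (A' - A)\<bar> / (2 * A)"
    using \<open>0 < A\<close> by simp
  also have "\<dots> \<le> (5 * d + d) / (2 * m)"
  proof (rule frac_le)
    show "\<bar>(u - u') + u' / A' * (A' - A)\<bar> \<le> 5 * d + d"
      using abs_triangle_ineq add_mono[OF du dq] by (rule order_trans)
    show "0 \<le> 5 * d + d" "0 < 2 * m" "2 * m \<le> 2 * A"
      using assms(4,5) by (auto simp: d_def A_def)
  qed
  also have "\<dots> = 3 / m * d"
    by simp
  finally show ?thesis
    unfolding d_def .
qed

(* (c0, c1, c2) encodes the vertex (c0 + c1 x, c2 y) of the barycentric subdivision of
  A = (0,0), B = (x,y), C = (1,0); e.g. B is (0, 1, 1) and the barycenter (1/3, 1/3, 1/3). *)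
definition vmap :: "real \<times> real \<times> real \<Rightarrow> pt \<Rightarrow> pt" where
  "vmap c p = (case c of (c0, c1, c2) \<Rightarrow> (c0 + c1 * fst p, c2 * snd p))"

definition contractive_coeffs :: "real \<times> real \<times> real \<Rightarrow> bool" where
  "contractive_coeffs c =
     (case c of (c0, c1, c2) \<Rightarrow> 0 \<le> c0 \<and> 0 \<le> c1 \<and> c0 + c1 \<le> 1 \<and> 0 \<le> c2 \<and> c2 \<le> 1)"

lemma vmap_in_unit_square:
  assumes "contractive_coeffs c" "p \<in> {0..1} \<times> {0..1}"
  shows "vmap c p \<in> {0..1} \<times> {0..1}"
proof -
  obtain c0 c1 c2 where c: "c = (c0, c1, c2)"
    by (cases c) auto
  have "c1 * fst p \<le> c1" "c2 * snd p \<le> 1"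
    using assms by (auto simp: c contractive_coeffs_def intro: mult_left_le mult_le_one)
  then show ?thesis
    using assms by (auto simp: c contractive_coeffs_def vmap_def)
qed

lemma dist1_vmap_le:
  assumes "contractive_coeffs c"
  shows "dist1 (vmap c p) (vmap c q) \<le> dist1 p q"
proof -
  obtain c0 c1 c2 where c: "c = (c0, c1, c2)"
    by (cases c) auto
  have "dist1 (vmap c p) (vmap c q) = c1 * \<bar>fst p - fst q\<bar> + c2 * \<bar>snd p - snd q\<bar>"
    using assms by (simp add: c contractive_coeffs_def vmap_def dist1_def abs_mult
        right_diff_distrib[symmetric])
  also have "\<dots> \<le> dist1 p q"
    using assms unfolding dist1_def
    by (intro add_mono mult_left_le_one_le) (auto simp: c contractive_coeffs_def)
  finally show ?thesis .
qed

definition subdiv_coeffs ::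
    "nat \<Rightarrow> (real \<times> real \<times> real) \<times> (real \<times> real \<times> real) \<times> (real \<times> real \<times> real)" where
  "subdiv_coeffs i =
     (if i = 1 then ((0, 0, 0), (0, 1/2, 1/2), (1/3, 1/3, 1/3))
      else if i = 2 then ((0, 1/2, 1/2), (0, 1, 1), (1/3, 1/3, 1/3))
      else if i = 3 then ((0, 1, 1), (1/2, 1/2, 1/2), (1/3, 1/3, 1/3))
      else if i = 4 then ((1/2, 1/2, 1/2), (1, 0, 0), (1/3, 1/3, 1/3))
      else if i = 5 then ((1, 0, 0), (1/2, 0, 0), (1/3, 1/3, 1/3))
      else ((1/2, 0, 0), (0, 0, 0), (1/3, 1/3, 1/3)))"

lemma subpt_eq_charpt_vmap:
  assumes "subdiv_coeffs i = (a, b, c)"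
  shows "subpt i p = charpt (vmap a p) (vmap b p) (vmap c p)"
  using assms
  by (auto simp: subdiv_coeffs_def subpt_def midpt_def vmap_def Let_def add_divide_distrib
      algebra_simps split: if_splits)

lemma subdiv_coeffs_contractive:
  assumes "subdiv_coeffs i = (a, b, c)"
  shows "contractive_coeffs a" "contractive_coeffs b" "contractive_coeffs c"
  using assms by (auto simp: subdiv_coeffs_def contractive_coeffs_def split: if_splits)

(* Each T_i carries one sixth of the area y/2 of ABC. *)
lemma subdiv_cross:
  assumes "subdiv_coeffs i = (a, b, c)"
  shows "\<bar>cross (vmap a p) (vmap b p) (vmap c p)\<bar> = \<bar>snd p\<bar> / 6"
  using assms
  by (auto simp: subdiv_coeffs_def vmap_def cross_def algebra_simps split: if_splits)

lemma subdiv_longest_sq: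
  assumes "subdiv_coeffs i = (a, b, c)" "p \<in> {0..1/2} \<times> {0..1}"
  shows "1/16 \<le> longest_sq (vmap a p) (vmap b p) (vmap c p)"
proof -
  have "1/4 \<le> \<bar>fst (vmap a p) - fst (vmap b p)\<bar> \<or> 1/4 \<le> \<bar>fst (vmap c p) - fst (vmap a p)\<bar>"
    using assms by (auto simp: subdiv_coeffs_def vmap_def split: if_splits)
  then show ?thesis
    using le_max3(1,3) unfolding longest_sq_def
    by (blast dest: sqdist_ge_sixteenth intro: order_trans)
qed

lemma subpt_in_region: "subpt i p \<in> {0..1/2} \<times> {0..1}"
proof -
  obtain a b c where "subdiv_coeffs i = (a, b, c)"
    by (cases "subdiv_coeffs i") auto
  then show ?thesis
    using subpt_eq_charpt_vmap charpt_in_region by metis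
qed

lemma subpt_snd_le:
  assumes "p \<in> {0..1/2} \<times> {0..1}"
  shows "snd (subpt i p) \<le> 3 * snd p"
proof -
  obtain a b c where abc: "subdiv_coeffs i = (a, b, c)"
    by (cases "subdiv_coeffs i") auto
  define L where "L = longest_sq (vmap a p) (vmap b p) (vmap c p)"
  have "1/16 \<le> L"
    unfolding L_def using abc assms by (rule subdiv_longest_sq)
  have "0 \<le> snd p"
    using assms by auto
  have "\<bar>cross (vmap a p) (vmap b p) (vmap c p)\<bar> = snd p / 6"
    using subdiv_cross[OF abc, of p] \<open>0 \<le> snd p\<close> by simp
  then have "snd (subpt i p) = (snd p / 6) / L"
    by (simp only: subpt_eq_charpt_vmap[OF abc] charpt_eq L_def snd_conv)
  also have "\<dots> \<le> (snd p / 6) / (1/16)"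
    using \<open>1/16 \<le> L\<close> \<open>0 \<le> snd p\<close> by (intro divide_left_mono) auto
  also have "\<dots> \<le> 3 * snd p"
    using \<open>0 \<le> snd p\<close> by simp
  finally show ?thesis .
qed

lemma subpt_fst_lipschitz:
  assumes p: "p \<in> {0..1/2} \<times> {0..1}" and q: "q \<in> {0..1/2} \<times> {0..1}"
  shows "\<bar>fst (subpt i p) - fst (subpt i q)\<bar> \<le> 576 * dist1 p q"
proof -
  obtain a b c where abc: "subdiv_coeffs i = (a, b, c)"
    by (cases "subdiv_coeffs i") auto
  note contr = subdiv_coeffs_contractive[OF abc]
  have sq: "\<bar>sqdist (vmap e p) (vmap f p) - sqdist (vmap e q) (vmap f q)\<bar> \<le> 4 * dist1 p q"
    if "contractive_coeffs e" "contractive_coeffs f" for e f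
  proof -
    have "p \<in> {0..1} \<times> {0..1}" "q \<in> {0..1} \<times> {0..1}"
      using p q by auto
    then have "\<bar>sqdist (vmap e p) (vmap f p) - sqdist (vmap e q) (vmap f q)\<bar>
        \<le> 2 * (dist1 (vmap e p) (vmap e q) + dist1 (vmap f p) (vmap f q))"
      using that by (intro sqdist_lipschitz vmap_in_unit_square)
    also have "\<dots> \<le> 4 * dist1 p q"
      using dist1_vmap_le[OF that(1), of p q] dist1_vmap_le[OF that(2), of p q] by simp
    finally show ?thesis .
  qed
  have "\<bar>fst (subpt i p) - fst (subpt i q)\<bar>
      \<le> 3 / (1/16) * (\<bar>sqdist (vmap a p) (vmap b p) - sqdist (vmap a q) (vmap b q)\<bar>
        + \<bar>sqdist (vmap b p) (vmap c p) - sqdist (vmap b q) (vmap c q)\<bar>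
        + \<bar>sqdist (vmap c p) (vmap a p) - sqdist (vmap c q) (vmap a q)\<bar>)"
    unfolding subpt_eq_charpt_vmap[OF abc] charpt_eq fst_conv
    using subdiv_longest_sq[OF abc p] subdiv_longest_sq[OF abc q]
    by (intro charx_lipschitz) (auto simp: sqdist_nonneg longest_sq_def)
  also have "\<dots> \<le> 3 / (1/16) * (4 * dist1 p q + 4 * dist1 p q + 4 * dist1 p q)"
    using sq[OF contr(1,2)] sq[OF contr(2,3)] sq[OF contr(3,1)]
    by (intro mult_left_mono add_mono) auto
  finally show ?thesis
    by simp
qed

lemma xy_iter_snoc: "xy_iter (w @ [i]) p = subpt i (xy_iter w p)"
  by (simp add: xy_iter_def xi_def yi_def)

lemma z_iter_snoc: "z_iter (w @ [i]) x = fst (subpt i (z_iter w x, 0))"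
  by (simp add: z_iter_def zi_def xi_def)

lemma xy_iter_in_region:
  "p \<in> {0..1/2} \<times> {0..1} \<Longrightarrow> xy_iter w p \<in> {0..1/2} \<times> {0..1}"
  by (induction w rule: rev_induct) (simp_all add: xy_iter_def[of "[]"] xy_iter_snoc subpt_in_region)

lemma z_iter_in_region:
  "x \<in> {0..1/2} \<Longrightarrow> z_iter w x \<in> {0..1/2}"
  using subpt_in_region
  by (induction w rule: rev_induct) (auto simp: z_iter_def[of "[]"] z_iter_snoc mem_Times_iff)

lemma xy_iter_z_iter_close:
  assumes "(x, y) \<in> {0..1/2} \<times> {0..1}"
  shows "\<bar>fst (xy_iter w (x, y)) - z_iter w x\<bar> \<le> 1152 ^ length w * y
    \<and> snd (xy_iter w (x, y)) \<le> 1152 ^ length w * y"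
proof (induction w rule: rev_induct)
  case Nil
  then show ?case
    using assms by (simp add: xy_iter_def z_iter_def)
next
  case (snoc i w)
  define p where "p = xy_iter w (x, y)"
  define z where "z = z_iter w x"
  define K :: real where "K = 1152 ^ length w"
  have p: "p \<in> {0..1/2} \<times> {0..1}"
    unfolding p_def using assms by (rule xy_iter_in_region)
  have z: "(z, 0::real) \<in> {0..1/2} \<times> {0..1}"
    unfolding z_def using assms z_iter_in_region[of x w] by auto
  have IH: "\<bar>fst p - z\<bar> \<le> K * y" "snd p \<le> K * y"
    using snoc.IH by (simp_all add: p_def z_def K_def)
  have "0 \<le> snd p"
    using p by auto
  have "\<bar>fst (subpt i p) - fst (subpt i (z, 0))\<bar> \<le> 576 * dist1 p (z, 0)"
    using p z by (rule subpt_fst_lipschitz)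
  also have "\<dots> \<le> 1152 * (K * y)"
    using IH \<open>0 \<le> snd p\<close> by (simp add: dist1_def)
  finally have "\<bar>fst (subpt i p) - fst (subpt i (z, 0))\<bar> \<le> 1152 * (K * y)" .
  moreover have "snd (subpt i p) \<le> 1152 * (K * y)"
    using subpt_snd_le[OF p, of i] IH(2) \<open>0 \<le> snd p\<close> by linarith
  ultimately show ?case
    by (simp add: xy_iter_snoc z_iter_snoc p_def z_def K_def mult.assoc)
qed

theorem lemma21:
  fixes N :: nat
  assumes "N \<ge> 1"
  shows "\<exists>K::real. \<forall>is x y. length is = N \<longrightarrow> set is \<subseteq> {1..6} \<longrightarrow> (x, y) \<in> charD \<longrightarrow>
           \<bar>fst (xy_iter is (x, y)) - z_iter is x\<bar> \<le> K * y \<and>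
           \<bar>snd (xy_iter is (x, y))\<bar> \<le> K * y"
proof (intro exI[of _ "1152 ^ N"] allI impI)
  fix "is" :: "nat list" and x y :: real
  assume "length is = N" and "(x, y) \<in> charD"
  then obtain P Q R where "(x, y) = charpt P Q R"
    unfolding charD_def by blast
  then have xy: "(x, y) \<in> {0..1/2} \<times> {0..1}"
    using charpt_in_region by metis
  have "0 \<le> snd (xy_iter is (x, y))"
    using xy_iter_in_region[OF xy, of "is"] by auto
  then show "\<bar>fst (xy_iter is (x, y)) - z_iter is x\<bar> \<le> 1152 ^ N * y \<and>
           \<bar>snd (xy_iter is (x, y))\<bar> \<le> 1152 ^ N * y"
    using xy_iter_z_iter_close[OF xy, of "is"] \<open>length is = N\<close> by simp
qed

end
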